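(* Let $H$ be a Hilbert space and let $A$ be a densely defined closed linear operator in $H$ (not necessarily selfadjoint). Let $Q:=AA^*$, $B:=(I+Q)^{-1}$ (a selfadjoint operator with $0\le B\le I$), and let $F$ denote the closure of the operator $(I+Q)^{-1}A$, originally defined on $D(A)$; $F$ is a bounded linear operator defined on all of $H$ with $\|F\|\le \frac12$. Let $N^*:=\{u: A^*u=0\}$. Let $f\in D(A)$, and for $\delta>0$ let $f_\delta\in H$ satisfy $\|f_\delta-f\|\le\delta$. Let $y$ be the unique minimal-norm solution of $By=Ff$. Define the iterates $$v_{n+1}=(I-B)v_n+Ff_\delta,\qquad n=0,1,2,\dots,$$ with an initial element $v_0\perp N^*$. If $n=n(\delta)$ is an integer with $\lim_{\delta\to0}n(\delta)=\infty$ and $\lim_{\delta\to0}[\delta\, n(\delta)]=0$, then, with $v_\delta:=v_{n(\delta)}$, $$\lim_{\delta\to0}\|v_\delta-y\|=0.$$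
   Context: $I$ denotes the identity operator on $H$; inequalities $0\le B\le I$ are in the sense of quadratic forms. The relation $v=Af$ is equivalent to $Bv=Ff$, so the theorem gives a stable method of computing the value $Af$ of the unbounded operator $A$ from noisy data $f_\delta$ (which need not lie in $D(A)$). *)

theory Defs
  imports "HOL-Analysis.Analysis"
begin

text \<open>A (possibly unbounded) linear operator in a real Hilbert space is given by
  a domain D and a map A, only its values on D being relevant.\<close>

definition lin_op :: "'a::real_inner set \<Rightarrow> ('a \<Rightarrow> 'a) \<Rightarrow> bool" where
  "lin_op D A \<longleftrightarrow> subspace D \<and>
     (\<forall>x\<in>D. \<forall>y\<in>D. A (x + y) = A x + A y) \<and>
     (\<forall>c. \<forall>x\<in>D. A (c *\<^sub>R x) = c *\<^sub>R A x)"

definition densely_defined :: "'a::real_inner set \<Rightarrow> bool" where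
  "densely_defined D \<longleftrightarrow> closure D = UNIV"

definition closed_op :: "'a::real_inner set \<Rightarrow> ('a \<Rightarrow> 'a) \<Rightarrow> bool" where
  "closed_op D A \<longleftrightarrow> closed ((\<lambda>x. (x, A x)) ` D)"

definition adj_dom :: "'a::real_inner set \<Rightarrow> ('a \<Rightarrow> 'a) \<Rightarrow> 'a set" where
  "adj_dom D A = {u. \<exists>w. \<forall>x\<in>D. inner (A x) u = inner x w}"

definition adj_op :: "'a::real_inner set \<Rightarrow> ('a \<Rightarrow> 'a) \<Rightarrow> 'a \<Rightarrow> 'a" where
  "adj_op D A u = (THE w. \<forall>x\<in>D. inner (A x) u = inner x w)"

definition Q_dom :: "'a::real_inner set \<Rightarrow> ('a \<Rightarrow> 'a) \<Rightarrow> 'a set" where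
  "Q_dom D A = {u \<in> adj_dom D A. adj_op D A u \<in> D}"

definition Q_op :: "'a::real_inner set \<Rightarrow> ('a \<Rightarrow> 'a) \<Rightarrow> 'a \<Rightarrow> 'a" where
  "Q_op D A u = A (adj_op D A u)"

definition B_op :: "'a::real_inner set \<Rightarrow> ('a \<Rightarrow> 'a) \<Rightarrow> 'a \<Rightarrow> 'a" where
  "B_op D A v = (THE u. u \<in> Q_dom D A \<and> u + Q_op D A u = v)"

text \<open>F = closure of (I+Q)^{-1} A defined on D(A): the bounded linear operator on H
  agreeing with B \<circ> A on D(A).\<close>
definition F_op :: "'a::real_inner set \<Rightarrow> ('a \<Rightarrow> 'a) \<Rightarrow> 'a \<Rightarrow> 'a" where
  "F_op D A = (THE F. bounded_linear F \<and> (\<forall>x\<in>D. F x = B_op D A (A x)))"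

definition adj_null :: "'a::real_inner set \<Rightarrow> ('a \<Rightarrow> 'a) \<Rightarrow> 'a set" where
  "adj_null D A = {u \<in> adj_dom D A. adj_op D A u = 0}"

end

theory Submission
  imports Defs
begin

(* Because the graph of A is closed, projecting (0, v) onto it solves u + Q u = v, so
   B = (I + Q)^-1 with Q = A A^* is defined on all of H; it is symmetric and injective, and T = I - B
   satisfies 0 <= T and T^2 <= T.  For such T the numbers <T^k w, w> decrease, which makes
   (T^k w) a Cauchy sequence whose limit is a fixed point of T, i.e. a zero of B; hence
   T^k w -> 0 for every w.  The iteration reads v_(k+1) = T v_k + F f_delta and y = T y + F f,
   so ||T|| <= 1 gives ||v_k - y|| <= ||T^k (v_0 - y)|| + k ||F|| delta, and both terms tend to 0
   when n(delta) -> infinity and delta n(delta) -> 0. *)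

lemma parallelogram_midpoint:
  fixes p x y :: "'a::real_inner"
  shows "(norm (x - y))\<^sup>2 = 2 * (norm (p - x))\<^sup>2 + 2 * (norm (p - y))\<^sup>2
    - 4 * (norm (p - (1/2) *\<^sub>R (x + y)))\<^sup>2"
  unfolding power2_norm_eq_inner
  by (simp add: inner_diff_left inner_diff_right inner_add_left inner_add_right inner_commute
      algebra_simps)

lemma closed_convex_nearest_point:
  fixes S :: "'a::{real_inner,complete_space} set"
  assumes "convex S" "closed S" "S \<noteq> {}"
  obtains s where "s \<in> S" "\<And>x. x \<in> S \<Longrightarrow> norm (p - s) \<le> norm (p - x)"
proof -
  let ?d = "\<lambda>x. (norm (p - x))\<^sup>2"
  define e where "e = Inf (?d ` S)"
  have bdd: "bdd_below (?d ` S)"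
    by (rule bdd_belowI[of _ 0]) auto
  have e_le: "e \<le> ?d x" if "x \<in> S" for x
    unfolding e_def using bdd that by (simp add: cInf_lower)
  have "\<exists>x\<in>S. ?d x < e + inverse (real (Suc k))" for k
    using \<open>S \<noteq> {}\<close> cInf_less_iff[OF _ bdd, of "e + inverse (real (Suc k))"]
    by (auto simp: e_def)
  then obtain xs where xs_in: "\<And>k. xs k \<in> S"
    and xs_near: "\<And>k. ?d (xs k) < e + inverse (real (Suc k))"
    by metis
  have xs_close: "(norm (xs m - xs k))\<^sup>2 \<le> 2 * inverse (real (Suc m)) + 2 * inverse (real (Suc k))"
    for m k
  proof -
    have "(1/2) *\<^sub>R (xs m + xs k) \<in> S"
      using convexD[OF \<open>convex S\<close> xs_in[of m] xs_in[of k], of "1/2" "1/2"]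
      by (simp add: scaleR_add_right)
    then show ?thesis
      using e_le parallelogram_midpoint[of "xs m" "xs k" p] xs_near[of m] xs_near[of k] by fastforce
  qed
  have "Cauchy xs"
  proof (rule CauchyI)
    fix \<epsilon> :: real assume "\<epsilon> > 0"
    then obtain M where M: "inverse (real (Suc M)) < \<epsilon>\<^sup>2 / 4"
      using reals_Archimedean[of "\<epsilon>\<^sup>2 / 4"] by auto
    have "norm (xs m - xs k) < \<epsilon>" if "M \<le> m" "M \<le> k" for m k
    proof -
      have "inverse (real (Suc m)) \<le> inverse (real (Suc M))"
        "inverse (real (Suc k)) \<le> inverse (real (Suc M))"
        using that by (auto intro!: le_imp_inverse_le)
      then have "(norm (xs m - xs k))\<^sup>2 < \<epsilon>\<^sup>2" using xs_close[of m k] M by linarith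
      then show ?thesis using \<open>\<epsilon> > 0\<close> by (simp add: power_less_imp_less_base)
    qed
    then show "\<exists>M. \<forall>m\<ge>M. \<forall>k\<ge>M. norm (xs m - xs k) < \<epsilon>" by blast
  qed
  then obtain s where s: "xs \<longlonglongrightarrow> s" using Cauchy_convergent_iff convergent_def by blast
  have "s \<in> S" using \<open>closed S\<close> s xs_in closed_sequentially by blast
  have "(\<lambda>k. ?d (xs k)) \<longlonglongrightarrow> ?d s"
    by (intro tendsto_intros s)
  moreover have "(\<lambda>k. e + inverse (real (Suc k))) \<longlonglongrightarrow> e"
    using tendsto_add[OF tendsto_const LIMSEQ_inverse_real_of_nat] by simp
  ultimately have "?d s \<le> e"
    using xs_near by (intro LIMSEQ_le) (auto intro: less_imp_le)
  have "norm (p - s) \<le> norm (p - x)" if "x \<in> S" for x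
    by (rule power2_le_imp_le[OF order_trans[OF \<open>?d s \<le> e\<close> e_le[OF that]] norm_ge_zero])
  with \<open>s \<in> S\<close> show ?thesis by (rule that)
qed

lemma nearest_point_orthogonal:
  fixes S :: "'a::real_inner set"
  assumes "subspace S" "s \<in> S" "\<And>x. x \<in> S \<Longrightarrow> norm (p - s) \<le> norm (p - x)" "x \<in> S"
  shows "inner (p - s) x = 0"
proof (cases "x = 0")
  case False
  define t where "t = inner (p - s) x / inner x x"
  have "inner x x > 0" using False by simp
  have "s + t *\<^sub>R x \<in> S" using assms by (simp add: subspace_add subspace_scale)
  then have "(norm (p - s))\<^sup>2 \<le> (norm ((p - s) - t *\<^sub>R x))\<^sup>2"
    using assms(3) by (simp add: algebra_simps)
  then have "0 \<le> t * t * inner x x - 2 * t * inner (p - s) x"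
    unfolding power2_norm_eq_inner
    by (simp add: inner_diff_left inner_diff_right inner_commute algebra_simps)
  also have "t * t * inner x x - 2 * t * inner (p - s) x = - (inner (p - s) x)\<^sup>2 / inner x x"
    using \<open>inner x x > 0\<close> unfolding t_def by (simp add: field_simps power2_eq_square)
  finally show ?thesis using \<open>inner x x > 0\<close> by (simp add: divide_simps)
qed simp

lemma orthogonal_projection_exists:
  fixes S :: "'a::{real_inner,complete_space} set"
  assumes "subspace S" "closed S"
  obtains s where "s \<in> S" "\<And>x. x \<in> S \<Longrightarrow> inner (p - s) x = 0"
proof -
  have "S \<noteq> {}" using \<open>subspace S\<close> subspace_0 by blast
  then obtain s where "s \<in> S" "\<And>x. x \<in> S \<Longrightarrow> norm (p - s) \<le> norm (p - x)"
    using closed_convex_nearest_point subspace_imp_convex assms by metis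
  then show ?thesis using that nearest_point_orthogonal[OF \<open>subspace S\<close>] by blast
qed

lemma norm_le_if_inner_self_le:
  fixes u v :: "'a::real_inner"
  assumes "inner u u \<le> inner u v"
  shows "norm u \<le> norm v"
proof -
  have "norm u * norm u \<le> norm u * norm v"
    using assms norm_cauchy_schwarz[of u v]
    by (simp add: power2_norm_eq_inner[symmetric] power2_eq_square)
  then show ?thesis
    by (cases "norm u = 0") (simp_all add: mult_le_cancel_left_pos)
qed

(* For symmetric T the condition T^2 <= T is equivalent to 0 <= T <= I. *)
locale positive_contraction =
  fixes T :: "'a::real_inner \<Rightarrow> 'a"
  assumes symmetric: "\<And>u z. inner (T u) z = inner u (T z)"
    and inner_square_le: "\<And>u. inner (T u) (T u) \<le> inner (T u) u"
begin

lemma norm_le: "norm (T u) \<le> norm u"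
  by (rule norm_le_if_inner_self_le[OF inner_square_le])

lemma inner_nonneg: "0 \<le> inner (T u) u"
  using inner_ge_zero[of "T u"] inner_square_le[of u] by linarith

lemma inner_le: "inner (T u) u \<le> inner u u"
proof -
  have "inner (T u) u \<le> norm (T u) * norm u" by (rule norm_cauchy_schwarz)
  also have "\<dots> \<le> norm u * norm u" by (simp add: mult_right_mono norm_le)
  finally show ?thesis by (simp add: power2_norm_eq_inner[symmetric] power2_eq_square)
qed

lemma inner_funpow:
  "inner ((T ^^ m) w) ((T ^^ k) w) = inner ((T ^^ (m + k)) w) w"
proof (induction m arbitrary: k)
  case 0
  show ?case by (simp add: inner_commute)
next
  case (Suc m)
  have "inner ((T ^^ Suc m) w) ((T ^^ k) w) = inner ((T ^^ m) w) ((T ^^ Suc k) w)"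
    using symmetric by simp
  then show ?case using Suc.IH[of "Suc k"] by simp
qed

(* With u = T^j w the sequence reads  <u, u> >= <T u, u> >= <T u, T u>  at k = 2j, 2j+1, 2j+2. *)

lemma inner_funpow_decseq: "decseq (\<lambda>k. inner ((T ^^ k) w) w)"
  and inner_funpow_nonneg: "0 \<le> inner ((T ^^ k) w) w"
proof -
  have "inner ((T ^^ Suc k) w) w \<le> inner ((T ^^ k) w) w \<and> 0 \<le> inner ((T ^^ k) w) w" for k
  proof -
    have "\<exists>j. k = 2 * j \<or> k = Suc (2 * j)" by presburger
    then obtain j where "k = 2 * j \<or> k = Suc (2 * j)" by blast
    then show ?thesis
    proof
      assume "k = 2 * j"
      then show ?thesis
        using inner_le[of "(T ^^ j) w"] inner_ge_zero[of "(T ^^ j) w"]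
          inner_funpow[where m=j and k=j] inner_funpow[where m="Suc j" and k=j] by (simp add: mult_2)
    next
      assume "k = Suc (2 * j)"
      then show ?thesis
        using inner_square_le[of "(T ^^ j) w"] inner_nonneg[of "(T ^^ j) w"]
          inner_funpow[where m="Suc j" and k=j] inner_funpow[where m="Suc j" and k="Suc j"]
        by (simp add: mult_2)
    qed
  qed
  then show "decseq (\<lambda>k. inner ((T ^^ k) w) w)" "0 \<le> inner ((T ^^ k) w) w"
    by (simp_all add: decseq_Suc_iff)
qed

lemma funpow_Cauchy: "Cauchy (\<lambda>k. (T ^^ k) w)"
proof (rule CauchyI)
  let ?c = "\<lambda>k. inner ((T ^^ k) w) w"
  obtain L where L: "?c \<longlonglongrightarrow> L"
    using decseq_convergent[OF inner_funpow_decseq allI[OF inner_funpow_nonneg]] by blast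
  have dist_sq: "(norm ((T ^^ m) w - (T ^^ k) w))\<^sup>2 = ?c (2 * m) - 2 * ?c (m + k) + ?c (2 * k)" for m k
  proof -
    have "(norm ((T ^^ m) w - (T ^^ k) w))\<^sup>2 = inner ((T ^^ m) w) ((T ^^ m) w)
        - 2 * inner ((T ^^ m) w) ((T ^^ k) w) + inner ((T ^^ k) w) ((T ^^ k) w)"
      unfolding power2_norm_eq_inner
      by (simp add: inner_diff_left inner_diff_right inner_commute[of "(T ^^ k) w" "(T ^^ m) w"])
    then show ?thesis by (simp only: inner_funpow mult_2)
  qed
  fix \<epsilon> :: real assume "\<epsilon> > 0"
  then obtain M where M: "\<And>i. i \<ge> M \<Longrightarrow> \<bar>?c i - L\<bar> < \<epsilon>\<^sup>2 / 4"
    using LIMSEQ_D[OF L, of "\<epsilon>\<^sup>2 / 4"] by auto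
  have "norm ((T ^^ m) w - (T ^^ k) w) < \<epsilon>" if "M \<le> m" "M \<le> k" for m k
  proof -
    have "2 * m \<ge> M" "m + k \<ge> M" "2 * k \<ge> M" using that by simp_all
    from M[OF this(1)] M[OF this(2)] M[OF this(3)]
    have "(norm ((T ^^ m) w - (T ^^ k) w))\<^sup>2 < \<epsilon>\<^sup>2"
      unfolding dist_sq abs_less_iff by linarith
    then show ?thesis using \<open>\<epsilon> > 0\<close> by (simp add: power_less_imp_less_base)
  qed
  then show "\<exists>M. \<forall>m\<ge>M. \<forall>k\<ge>M. norm ((T ^^ m) w - (T ^^ k) w) < \<epsilon>" by blast
qed

end

lemma positive_contraction_funpow_tendsto_zero:
  fixes T :: "'a::{real_inner,complete_space} \<Rightarrow> 'a"
  assumes "positive_contraction T" "continuous_on UNIV T" "\<And>p. T p = p \<Longrightarrow> p = 0"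
  shows "(\<lambda>k. (T ^^ k) w) \<longlonglongrightarrow> 0"
proof -
  interpret positive_contraction T by fact
  obtain p where p: "(\<lambda>k. (T ^^ k) w) \<longlonglongrightarrow> p"
    using funpow_Cauchy Cauchy_convergent_iff convergent_def by blast
  have "(\<lambda>k. T ((T ^^ k) w)) \<longlonglongrightarrow> T p"
    using continuous_on_tendsto_compose[OF assms(2) p] by simp
  moreover have "(\<lambda>k. T ((T ^^ k) w)) \<longlonglongrightarrow> p"
    using LIMSEQ_Suc[OF p] by simp
  ultimately have "p = 0" using LIMSEQ_unique assms(3) by metis
  then show ?thesis using p by simp
qed

lemma closed_Collect_dense:
  assumes "closure D = UNIV" "closed {x. P x}" "\<And>x. x \<in> D \<Longrightarrow> P x"
  shows "P x"
proof -
  have "closure D \<subseteq> {x. P x}" using assms(2,3) by (intro closure_minimal) auto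
  then show ?thesis using assms(1) by auto
qed

lemma continuous_eq_on_dense:
  fixes f g :: "'a::topological_space \<Rightarrow> 'b::t2_space"
  assumes "closure D = UNIV" "continuous_on UNIV f" "continuous_on UNIV g"
    and "\<And>x. x \<in> D \<Longrightarrow> f x = g x"
  shows "f = g"
proof
  fix x show "f x = g x"
    by (rule closed_Collect_dense[OF assms(1) closed_Collect_eq[OF assms(2,3)] assms(4)])
qed

lemma bounded_linear_extension_from_dense:
  fixes f :: "'a::real_normed_vector \<Rightarrow> 'b::{real_normed_vector,complete_space}"
  assumes D: "subspace D" "closure D = UNIV"
    and add: "\<And>x y. x \<in> D \<Longrightarrow> y \<in> D \<Longrightarrow> f (x + y) = f x + f y"
    and scale: "\<And>c x. x \<in> D \<Longrightarrow> f (c *\<^sub>R x) = c *\<^sub>R f x"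
    and bound: "\<And>x. x \<in> D \<Longrightarrow> norm (f x) \<le> C * norm x" and "0 \<le> C"
  obtains g where "bounded_linear g" "\<And>x. x \<in> D \<Longrightarrow> g x = f x"
proof -
  have diff: "f x - f y = f (x - y)" if "x \<in> D" "y \<in> D" for x y
    using add[of "x - y" y] that \<open>subspace D\<close> by (simp add: subspace_diff)
  have "C-lipschitz_on D f"
    using bound \<open>0 \<le> C\<close> \<open>subspace D\<close>
    by (intro lipschitz_onI) (simp_all add: dist_norm diff subspace_diff)
  then obtain g where g_lip: "C-lipschitz_on UNIV g" and g_ext: "\<And>x. x \<in> D \<Longrightarrow> g x = f x"
    using lipschitz_extend_closure \<open>closure D = UNIV\<close> by metis
  have cont: "continuous_on UNIV g" using g_lip by (rule lipschitz_on_continuous_on)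
  have g_0: "g 0 = 0" using scale[of 0 0] g_ext[of 0] \<open>subspace D\<close> subspace_0 by auto
  have "g (x + y) = g x + g y" for x y
  proof -
    have "closure (D \<times> D) = UNIV" using \<open>closure D = UNIV\<close> by (simp add: closure_Times)
    moreover have "closed {p. g (fst p + snd p) = g (fst p) + g (snd p)}"
      by (intro closed_Collect_eq continuous_on_add continuous_on_compose2[OF cont])
        (auto intro!: continuous_intros)
    moreover have "g (fst p + snd p) = g (fst p) + g (snd p)" if "p \<in> D \<times> D" for p
      using that add g_ext \<open>subspace D\<close> by (auto simp: subspace_add)
    ultimately show ?thesis
      using closed_Collect_dense[of "D \<times> D" "\<lambda>p. g (fst p + snd p) = g (fst p) + g (snd p)"
          "(x, y)"]
      by simp
  qed
  moreover have "g (c *\<^sub>R x) = c *\<^sub>R g x" for c x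
    by (rule closed_Collect_dense[OF \<open>closure D = UNIV\<close>],
        intro closed_Collect_eq continuous_on_compose2[OF cont])
      (auto intro!: continuous_intros cont simp: scale g_ext \<open>subspace D\<close> subspace_scale)
  moreover have "norm (g x) \<le> norm x * C" for x
    using lipschitz_onD[OF g_lip, of x 0] g_0 by (simp add: dist_norm mult.commute)
  ultimately have "bounded_linear g" by (rule bounded_linear_intro)
  then show ?thesis using g_ext by (rule that)
qed

lemma perturbed_iteration_error:
  fixes T :: "'a::real_normed_vector \<Rightarrow> 'a"
  assumes "linear T" "\<And>x. norm (T x) \<le> norm x"
    and v_Suc: "\<And>k. v (Suc k) = T (v k) + b'" and y: "y = T y + b"
  shows "norm (v k - y - (T ^^ k) (v 0 - y)) \<le> real k * norm (b' - b)"
proof (induction k)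
  case (Suc k)
  let ?e = "v k - y - (T ^^ k) (v 0 - y)"
  have b: "b = y - T y" using y by (metis add_diff_cancel_left')
  have "v (Suc k) - y - (T ^^ Suc k) (v 0 - y) = T ?e + (b' - b)"
    by (simp add: v_Suc b linear_diff[OF \<open>linear T\<close>] linear_add[OF \<open>linear T\<close>]
        algebra_simps)
  then have "norm (v (Suc k) - y - (T ^^ Suc k) (v 0 - y)) = norm (T ?e + (b' - b))"
    by (rule arg_cong)
  also have "\<dots> \<le> norm (T ?e) + norm (b' - b)"
    by (rule norm_triangle_ineq)
  also have "\<dots> \<le> real k * norm (b' - b) + norm (b' - b)"
    using assms(2)[of ?e] Suc.IH by linarith
  finally show ?case by (simp add: algebra_simps)
qed simp

lemma perturbed_iteration_bound:
  fixes T :: "'a::real_normed_vector \<Rightarrow> 'a"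
  assumes "linear T" "\<And>x. norm (T x) \<le> norm x"
    and "\<And>k. v (Suc k) = T (v k) + b'" and "y = T y + b"
  shows "norm (v k - y) \<le> norm ((T ^^ k) (v 0 - y)) + real k * norm (b' - b)"
proof -
  have "norm (v k - y - (T ^^ k) (v 0 - y)) \<le> real k * norm (b' - b)"
    using assms by (rule perturbed_iteration_error)
  then show ?thesis using norm_triangle_sub[of "v k - y" "(T ^^ k) (v 0 - y)"] by linarith
qed

locale closed_densely_defined =
  fixes D :: "'a::{real_inner,complete_space} set" and A :: "'a \<Rightarrow> 'a"
  assumes lin: "lin_op D A" and dense: "densely_defined D" and closed: "closed_op D A"
begin

abbreviation "adj \<equiv> adj_op D A"
abbreviation "B \<equiv> B_op D A"

lemma D_subspace: "subspace D"
  using lin by (simp add: lin_op_def)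

lemma A_add: "x \<in> D \<Longrightarrow> y \<in> D \<Longrightarrow> A (x + y) = A x + A y"
  using lin by (simp add: lin_op_def)

lemma A_scale: "x \<in> D \<Longrightarrow> A (c *\<^sub>R x) = c *\<^sub>R A x"
  using lin by (simp add: lin_op_def)

lemma A_zero: "A 0 = 0"
  using A_scale[of 0 0] subspace_0[OF D_subspace] by simp

lemma A_diff: "x \<in> D \<Longrightarrow> y \<in> D \<Longrightarrow> A (x - y) = A x - A y"
  using A_add[of "x - y" y] D_subspace by (simp add: subspace_diff)

lemma adj_op_eqI:
  assumes "\<forall>x\<in>D. inner (A x) u = inner x w"
  shows "adj u = w"
  unfolding adj_op_def
proof (rule the_equality)
  fix w' assume "\<forall>x\<in>D. inner (A x) u = inner x w'"
  then have "\<forall>x\<in>D. inner x (w' - w) = 0" using assms by (simp add: inner_diff_right)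
  then show "w' = w"
    using closed_Collect_dense[of D "\<lambda>x. inner x (w' - w) = 0" "w' - w"] dense
    by (simp add: densely_defined_def closed_Collect_eq continuous_on_inner continuous_on_id
        continuous_on_const)
qed (rule assms)

lemma adj_op_inner: "u \<in> adj_dom D A \<Longrightarrow> x \<in> D \<Longrightarrow> inner (A x) u = inner x (adj u)"
  using adj_op_eqI by (auto simp: adj_dom_def)

text \<open>Projecting \<open>(0, v)\<close> onto the closed graph of \<open>A\<close> gives a point \<open>(w, A w)\<close>; orthogonality
  of the remainder says exactly that \<open>u = v - A w\<close> lies in \<open>D(A\<^sup>*)\<close> with \<open>A\<^sup>* u = w\<close>.\<close>

lemma resolvent_equation_solvable: "\<exists>u\<in>Q_dom D A. u + Q_op D A u = v"
proof -
  let ?G = "(\<lambda>x. (x, A x)) ` D"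
  have "subspace ?G"
    unfolding subspace_def
  proof (intro conjI ballI allI)
    show "0 \<in> ?G"
      using A_zero subspace_0[OF D_subspace] by (force simp: zero_prod_def)
  next
    fix p q assume "p \<in> ?G" "q \<in> ?G"
    then obtain x y where "x \<in> D" "y \<in> D" "p = (x, A x)" "q = (y, A y)" by blast
    then show "p + q \<in> ?G"
      using A_add[of x y] subspace_add[OF D_subspace] by (auto intro!: image_eqI[of _ _ "x + y"])
  next
    fix c :: real and p assume "p \<in> ?G"
    then obtain x where "x \<in> D" "p = (x, A x)" by blast
    then show "c *\<^sub>R p \<in> ?G"
      using A_scale[of x c] subspace_scale[OF D_subspace]
      by (auto intro!: image_eqI[of _ _ "c *\<^sub>R x"])
  qed
  moreover have "closed ?G" using closed by (simp add: closed_op_def)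
  ultimately obtain s where "s \<in> ?G" and orth: "\<And>p. p \<in> ?G \<Longrightarrow> inner ((0, v) - s) p = 0"
    using orthogonal_projection_exists[of ?G "(0, v)"] by blast
  then obtain w where "w \<in> D" "s = (w, A w)" by blast
  define u where "u = v - A w"
  have "\<forall>x\<in>D. inner (A x) u = inner x w"
  proof
    fix x assume "x \<in> D"
    then have "inner ((0, v) - s) (x, A x) = 0" using orth by blast
    then show "inner (A x) u = inner x w"
      by (simp add: \<open>s = (w, A w)\<close> u_def inner_commute inner_diff_left)
  qed
  then have "u \<in> adj_dom D A" "adj u = w" using adj_op_eqI by (auto simp: adj_dom_def)
  then show ?thesis using \<open>w \<in> D\<close> by (auto simp: Q_dom_def Q_op_def u_def)
qed

lemma resolvent_equation_unique:
  assumes "u \<in> Q_dom D A" "u' \<in> Q_dom D A" "u + Q_op D A u = u' + Q_op D A u'"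
  shows "u = u'"
proof -
  define t where "t = adj u - adj u'"
  have "t \<in> D" using assms D_subspace by (simp add: Q_dom_def t_def subspace_diff)
  have diff: "u - u' = - A t"
    using assms by (auto simp: Q_dom_def Q_op_def t_def A_diff algebra_simps)
  have "inner (A t) (u - u') = inner t t"
    using adj_op_inner[of u t] adj_op_inner[of u' t] assms \<open>t \<in> D\<close>
    by (simp add: Q_dom_def t_def inner_diff_right inner_diff_left)
  then have "inner (u - u') (u - u') + inner t t = 0" by (simp add: diff)
  then have "inner (u - u') (u - u') = 0" using inner_ge_zero[of "u - u'"] inner_ge_zero[of t] by linarith
  then show ?thesis by simp
qed

lemma B_op_solves: "B v \<in> Q_dom D A \<and> B v + Q_op D A (B v) = v"
  unfolding B_op_def
  by (rule theI') (use resolvent_equation_solvable resolvent_equation_unique in blast)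

lemma B_op_eqI: "u \<in> Q_dom D A \<Longrightarrow> u + Q_op D A u = v \<Longrightarrow> B v = u"
  using B_op_solves[of v] resolvent_equation_unique[of u "B v"] by auto

lemma adj_B_op_mem: "adj (B v) \<in> D"
  using B_op_solves[of v] by (simp add: Q_dom_def)

lemma B_op_plus_A_adj: "B v + A (adj (B v)) = v"
  using B_op_solves[of v] by (simp add: Q_op_def)

lemma inner_A_B_op: "x \<in> D \<Longrightarrow> inner (A x) (B v) = inner x (adj (B v))"
  using B_op_solves[of v] adj_op_inner by (simp add: Q_dom_def)

lemma B_op_add: "B (v + v') = B v + B v'"
proof (rule B_op_eqI)
  have "\<forall>x\<in>D. inner (A x) (B v + B v') = inner x (adj (B v) + adj (B v'))"
    by (simp add: inner_A_B_op inner_add_right)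
  then have "B v + B v' \<in> adj_dom D A" "adj (B v + B v') = adj (B v) + adj (B v')"
    unfolding adj_dom_def by (blast, rule adj_op_eqI)
  then show "B v + B v' \<in> Q_dom D A" "B v + B v' + Q_op D A (B v + B v') = v + v'"
    using adj_B_op_mem[of v] adj_B_op_mem[of v'] B_op_plus_A_adj[of v] B_op_plus_A_adj[of v']
    by (simp_all add: Q_dom_def Q_op_def A_add subspace_add[OF D_subspace] algebra_simps)
qed

lemma B_op_scale: "B (c *\<^sub>R v) = c *\<^sub>R B v"
proof (rule B_op_eqI)
  have "\<forall>x\<in>D. inner (A x) (c *\<^sub>R B v) = inner x (c *\<^sub>R adj (B v))"
    by (simp add: inner_A_B_op)
  then have "c *\<^sub>R B v \<in> adj_dom D A" "adj (c *\<^sub>R B v) = c *\<^sub>R adj (B v)"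
    unfolding adj_dom_def by (blast, rule adj_op_eqI)
  then show "c *\<^sub>R B v \<in> Q_dom D A" "c *\<^sub>R B v + Q_op D A (c *\<^sub>R B v) = c *\<^sub>R v"
    using adj_B_op_mem[of v] B_op_plus_A_adj[of v]
    by (simp_all add: Q_dom_def Q_op_def A_scale subspace_scale[OF D_subspace] flip: scaleR_add_right)
qed

lemma inner_self_decompose:
  "inner v v = inner (B v) (B v) + 2 * inner (adj (B v)) (adj (B v))
     + inner (A (adj (B v))) (A (adj (B v)))"
proof -
  have "inner v v = inner (B v + A (adj (B v))) (B v + A (adj (B v)))"
    by (simp add: B_op_plus_A_adj)
  also have "\<dots> = inner (B v) (B v) + 2 * inner (A (adj (B v))) (B v)
      + inner (A (adj (B v))) (A (adj (B v)))"
    by (simp add: inner_add_left inner_add_right inner_commute[of "B v" "A (adj (B v))"])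
  finally show ?thesis by (simp add: inner_A_B_op adj_B_op_mem)
qed

lemma norm_B_op_le: "norm (B v) \<le> norm v"
  and norm_adj_B_op_le: "norm (adj (B v)) \<le> norm v"
  using inner_self_decompose[of v] inner_ge_zero[of "B v"] inner_ge_zero[of "adj (B v)"]
    inner_ge_zero[of "A (adj (B v))"]
  by (simp_all add: norm_le)

lemma bounded_linear_B_op: "bounded_linear B"
  by (rule bounded_linear_intro[of _ 1]) (simp_all add: B_op_add B_op_scale norm_B_op_le)

lemma B_op_symmetric: "inner (B v) z = inner v (B z)"
proof -
  have "inner (B v) z = inner (B v) (B z) + inner (adj (B v)) (adj (B z))"
    using B_op_plus_A_adj[of z] inner_A_B_op[OF adj_B_op_mem, of z v]
    by (metis inner_add_right inner_commute)
  also have "\<dots> = inner v (B z)"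
    using B_op_plus_A_adj[of v] inner_A_B_op[OF adj_B_op_mem, of v z]
    by (metis inner_add_left)
  finally show ?thesis .
qed

lemma B_op_eq_0_iff: "B v = 0 \<longleftrightarrow> v = 0"
proof
  assume "B v = 0"
  moreover have "adj 0 = 0" by (rule adj_op_eqI) simp
  ultimately show "v = 0" using B_op_plus_A_adj[of v] A_zero by simp
qed (simp add: linear_0[OF bounded_linear.linear[OF bounded_linear_B_op]])

lemma A_adj_B_op_eq: "A (adj (B v)) = v - B v"
  using B_op_plus_A_adj[of v] by (simp add: algebra_simps)

sublocale T: positive_contraction "\<lambda>v. v - B v"
proof
  show "inner (u - B u) z = inner u (z - B z)" for u z
    by (simp add: inner_diff_left inner_diff_right B_op_symmetric)
  show "inner (u - B u) (u - B u) \<le> inner (u - B u) u" for u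
  proof -
    let ?a = "adj (B u)"
    have "inner (u - B u) u = inner (A ?a) (B u + A ?a)"
      by (simp add: A_adj_B_op_eq)
    also have "\<dots> = inner ?a ?a + inner (A ?a) (A ?a)"
      by (simp add: inner_add_right inner_A_B_op adj_B_op_mem)
    finally show ?thesis using inner_ge_zero[of ?a] by (simp add: A_adj_B_op_eq)
  qed
qed

lemma norm_B_op_A_le: "x \<in> D \<Longrightarrow> norm (B (A x)) \<le> norm x"
proof -
  assume "x \<in> D"
  let ?z = "B (A x)"
  have "norm ?z * norm ?z = inner ?z ?z"
    by (simp add: power2_norm_eq_inner flip: power2_eq_square)
  also have "\<dots> = inner x (adj (B ?z))"
    by (simp add: B_op_symmetric[of "A x"] inner_A_B_op[OF \<open>x \<in> D\<close>])
  also have "\<dots> \<le> norm x * norm ?z"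
    using norm_cauchy_schwarz[of x "adj (B ?z)"] norm_adj_B_op_le[of ?z]
    by (meson mult_left_mono norm_ge_zero order_trans)
  finally show ?thesis
    by (cases "norm ?z = 0") (simp_all add: mult_le_cancel_right_pos)
qed

lemma F_op_characterization: "bounded_linear (F_op D A) \<and> (\<forall>x\<in>D. F_op D A x = B (A x))"
proof -
  have closure_D: "closure D = UNIV" using dense by (simp add: densely_defined_def)
  have add: "B (A (x + y)) = B (A x) + B (A y)" if "x \<in> D" "y \<in> D" for x y
    using that by (simp add: A_add B_op_add)
  have scale: "B (A (c *\<^sub>R x)) = c *\<^sub>R B (A x)" if "x \<in> D" for c x
    using that by (simp add: A_scale B_op_scale)
  have bound: "norm (B (A x)) \<le> 1 * norm x" if "x \<in> D" for x
    using norm_B_op_A_le[OF that] by simp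
  obtain g where g: "bounded_linear g" "\<And>x. x \<in> D \<Longrightarrow> g x = B (A x)"
    using bounded_linear_extension_from_dense[where f="\<lambda>x. B (A x)" and C=1,
        OF D_subspace closure_D add scale bound zero_le_one] by blast
  have "F_op D A = g"
    unfolding F_op_def
  proof (rule the_equality)
    fix F assume F: "bounded_linear F \<and> (\<forall>x\<in>D. F x = B (A x))"
    show "F = g"
      using F g by (intro continuous_eq_on_dense[OF closure_D] linear_continuous_on) auto
  qed (use g in blast)
  with g show ?thesis by simp
qed

lemma bounded_linear_I_minus_B_op: "bounded_linear (\<lambda>v. v - B v)"
  by (rule bounded_linear_sub[OF bounded_linear_ident bounded_linear_B_op])

lemma funpow_I_minus_B_op_tendsto_zero: "(\<lambda>k. ((\<lambda>v. v - B v) ^^ k) w) \<longlonglongrightarrow> 0"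
  using positive_contraction_funpow_tendsto_zero[OF T.positive_contraction_axioms
      linear_continuous_on[OF bounded_linear_I_minus_B_op]]
  by (simp add: B_op_eq_0_iff)

lemma iteration_error_bound:
  assumes "\<And>k. u (Suc k) = u k - B (u k) + F_op D A g" and "B y = F_op D A f"
  shows "norm (u k - y) \<le> norm (((\<lambda>v. v - B v) ^^ k) (u 0 - y)) + real k * norm (F_op D A (g - f))"
proof -
  have "linear (F_op D A)" using F_op_characterization bounded_linear.linear by blast
  then show ?thesis
    using perturbed_iteration_bound[OF bounded_linear.linear[OF bounded_linear_I_minus_B_op] T.norm_le,
        of u "F_op D A g" y "F_op D A f" k] assms
    by (simp add: linear_diff)
qed

end

(* Nor is f \<in> D needed, F being bounded on H. *)

theorem theorem2:
  fixes D :: "'a::{real_inner, complete_space} set" and A :: "'a \<Rightarrow> 'a"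
    and f y v0 :: 'a and f\<delta> :: "real \<Rightarrow> 'a" and v :: "real \<Rightarrow> nat \<Rightarrow> 'a"
    and n :: "real \<Rightarrow> nat"
  assumes lin: "lin_op D A" and dense: "densely_defined D" and clo: "closed_op D A"
    and fD: "f \<in> D"
    and noise: "\<forall>\<delta>>0. norm (f\<delta> \<delta> - f) \<le> \<delta>"
    and y_sol: "B_op D A y = F_op D A f"
    and y_min: "\<forall>z. B_op D A z = F_op D A f \<longrightarrow> norm y \<le> norm z"
    and v0_perp: "\<forall>u\<in>adj_null D A. inner v0 u = 0"
    and v_0: "\<forall>\<delta>. v \<delta> 0 = v0"
    and v_Suc: "\<forall>\<delta> k. v \<delta> (Suc k) = v \<delta> k - B_op D A (v \<delta> k) + F_op D A (f\<delta> \<delta>)"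
    and n_inf: "filterlim n at_top (at_right 0)"
    and n_small: "((\<lambda>\<delta>. \<delta> * real (n \<delta>)) \<longlongrightarrow> 0) (at_right 0)"
  shows "((\<lambda>\<delta>. norm (v \<delta> (n \<delta>) - y)) \<longlongrightarrow> 0) (at_right 0)"
proof -
  interpret closed_densely_defined D A by unfold_locales (fact lin dense clo)+
  let ?T = "\<lambda>v. v - B_op D A v" and ?F = "F_op D A"
  obtain K where K: "\<And>x. norm (?F x) \<le> norm x * K" "K > 0"
    using F_op_characterization bounded_linear.pos_bounded by blast
  have bound: "norm (v \<delta> k - y) \<le> norm ((?T ^^ k) (v0 - y)) + real k * (\<delta> * K)"
    if "\<delta> > 0" for \<delta> k
  proof -
    have "norm (?F (f\<delta> \<delta> - f)) \<le> \<delta> * K"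
      using K(1)[of "f\<delta> \<delta> - f"] noise that \<open>K > 0\<close>
      by (simp add: order_trans[OF _ mult_right_mono])
    then have "real k * norm (?F (f\<delta> \<delta> - f)) \<le> real k * (\<delta> * K)"
      by (rule mult_left_mono) simp
    moreover have "norm (v \<delta> k - y) \<le> norm ((?T ^^ k) (v0 - y)) + real k * norm (?F (f\<delta> \<delta> - f))"
      using iteration_error_bound[of "v \<delta>" "f\<delta> \<delta>" y f k] v_0 v_Suc y_sol by simp
    ultimately show ?thesis by linarith
  qed
  have lim: "((\<lambda>\<delta>. norm ((?T ^^ n \<delta>) (v0 - y)) + real (n \<delta>) * (\<delta> * K)) \<longlongrightarrow> 0) (at_right 0)"
    using tendsto_add[OF
        tendsto_norm_zero[OF filterlim_compose[OF funpow_I_minus_B_op_tendsto_zero n_inf]]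
        tendsto_mult_left_zero[OF n_small, of K], of "v0 - y"]
    by (simp add: ac_simps)
  have ev: "\<forall>\<^sub>F \<delta> in at_right 0.
      norm (v \<delta> (n \<delta>) - y) \<le> norm ((?T ^^ n \<delta>) (v0 - y)) + real (n \<delta>) * (\<delta> * K)"
    using eventually_at_right_less[of "0::real"] by (rule eventually_mono) (rule bound)
  show ?thesis
    by (rule tendsto_sandwich[OF _ ev tendsto_const lim]) simp
qed

end
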